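(* Let $G$ be a connected graph on vertex set $[n]=\{1,\dots,n\}$ and let $\pi$ be a permutation of $[n]$. If $C_1$ and $C_2$ are two distinct cycles of $\pi$ that are mutually routable in 2 steps, then $|C_1|=|C_2|$.
   Context: Routing via matchings: each vertex $i$ of $G$ initially holds a pebble, and the pebble initially on vertex $i$ must be moved to vertex $\pi(i)$. A step consists of choosing a matching of $G$ and swapping the pebbles at the two endpoints of every matched edge. A cycle of $\pi$ is identified with its set of vertices. Two cycles $C_1,C_2$ of $\pi$ are mutually routable in 2 steps if the pebbles initially on $C_1\cup C_2$ can all be brought to their destinations in at most 2 steps using only edges of $G$ with one endpoint in $C_1$ and the other in $C_2$. *)

theory Defs
  imports "HOL-Combinatorics.Permutations"
begin

definition simple_graph_on :: "nat \<Rightarrow> (nat \<Rightarrow> nat \<Rightarrow> bool) \<Rightarrow> bool" where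
  "simple_graph_on n E \<longleftrightarrow>
     (\<forall>u v. E u v \<longrightarrow> E v u) \<and> (\<forall>u. \<not> E u u) \<and>
     (\<forall>u v. E u v \<longrightarrow> u \<in> {1..n} \<and> v \<in> {1..n})"

definition connected_graph_on :: "nat \<Rightarrow> (nat \<Rightarrow> nat \<Rightarrow> bool) \<Rightarrow> bool" where
  "connected_graph_on n E \<longleftrightarrow> (\<forall>u\<in>{1..n}. \<forall>v\<in>{1..n}. E\<^sup>*\<^sup>* u v)"

definition is_matching :: "(nat \<Rightarrow> nat \<Rightarrow> bool) \<Rightarrow> nat set set \<Rightarrow> bool" where
  "is_matching E M \<longleftrightarrow>
     (\<forall>e\<in>M. \<exists>u v. e = {u, v} \<and> u \<noteq> v \<and> E u v) \<and>
     (\<forall>e\<in>M. \<forall>f\<in>M. e \<noteq> f \<longrightarrow> e \<inter> f = {})"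

text \<open>A configuration c maps each vertex to the pebble currently on it.
  A step along matching M swaps the pebbles at the endpoints of every matched edge.\<close>
definition swap_step :: "nat set set \<Rightarrow> (nat \<Rightarrow> nat) \<Rightarrow> (nat \<Rightarrow> nat)" where
  "swap_step M c v =
     (if \<exists>u. u \<noteq> v \<and> {u, v} \<in> M then c (THE u. u \<noteq> v \<and> {u, v} \<in> M) else c v)"

definition run_steps :: "nat set set list \<Rightarrow> (nat \<Rightarrow> nat)" where
  "run_steps Ms = foldl (\<lambda>c M. swap_step M c) id Ms"

definition cycle_of :: "(nat \<Rightarrow> nat) \<Rightarrow> nat \<Rightarrow> nat set" where
  "cycle_of \<pi> i = {(\<pi> ^^ k) i | k. True}"

definition perm_cycles :: "nat \<Rightarrow> (nat \<Rightarrow> nat) \<Rightarrow> nat set set" where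
  "perm_cycles n \<pi> = cycle_of \<pi> ` {1..n}"

text \<open>C1, C2 mutually routable in 2 steps: at most 2 matchings, using only edges
  of E between C1 and C2, bring every pebble initially on v \<in> C1 \<union> C2 to \<pi> v.\<close>
definition mutually_routable_2 ::
  "(nat \<Rightarrow> nat \<Rightarrow> bool) \<Rightarrow> (nat \<Rightarrow> nat) \<Rightarrow> nat set \<Rightarrow> nat set \<Rightarrow> bool" where
  "mutually_routable_2 E \<pi> C1 C2 \<longleftrightarrow>
     (\<exists>Ms. length Ms \<le> 2 \<and>
        (\<forall>M\<in>set Ms. is_matching E M \<and> (\<forall>e\<in>M. \<exists>u\<in>C1. \<exists>v\<in>C2. e = {u, v})) \<and>
        (\<forall>i\<in>C1 \<union> C2. run_steps Ms (\<pi> i) = i))"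

end

theory Submission
  imports Defs "HOL-Combinatorics.Orbits"
begin

text \<open>A step along a matching moves every pebble to the partner of its vertex, and the partner
  map of a matching is an involution. If only edges between \<open>C1\<close> and \<open>C2\<close> may be used, a
  pebble on a cycle \<open>C1\<close> of length \<open>> 1\<close> has to leave \<open>C1\<close> and come back within two steps, so
  its first step takes it into \<open>C2\<close>. The first partner map therefore injects \<open>C1\<close> into \<open>C2\<close>, and
  \<open>|C1| \<le> |C2|\<close>; cycles of length 1 satisfy this trivially. By symmetry \<open>|C1| = |C2|\<close>.\<close>

definition matching_partner :: "nat set set \<Rightarrow> nat \<Rightarrow> nat" where
  "matching_partner M v =
     (if \<exists>u. u \<noteq> v \<and> {u, v} \<in> M then (THE u. u \<noteq> v \<and> {u, v} \<in> M) else v)"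

definition edges_between :: "nat set set \<Rightarrow> nat set \<Rightarrow> nat set \<Rightarrow> bool" where
  "edges_between M C D \<longleftrightarrow> (\<forall>e\<in>M. \<exists>u\<in>C. \<exists>v\<in>D. e = {u, v})"

lemma edges_between_commute: "edges_between M C D \<longleftrightarrow> edges_between M D C"
  unfolding edges_between_def by (metis insert_commute)

lemma matching_partner_eq:
  assumes "is_matching E M" "u \<noteq> v" "{u, v} \<in> M"
  shows "matching_partner M v = u"
proof -
  have "w = u" if "w \<noteq> v" "{w, v} \<in> M" for w
  proof (rule ccontr)
    assume "w \<noteq> u"
    then have "{w, v} \<noteq> {u, v}" using \<open>w \<noteq> v\<close> by (simp add: doubleton_eq_iff)
    then have "{w, v} \<inter> {u, v} = {}"
      using assms(1,3) that(2) unfolding is_matching_def by simp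
    then show False by simp
  qed
  then have "(THE w. w \<noteq> v \<and> {w, v} \<in> M) = u"
    using assms(2,3) by (intro the_equality) blast+
  then show ?thesis using assms(2,3) unfolding matching_partner_def by auto
qed

lemma matching_partner_edge:
  assumes "is_matching E M" "matching_partner M v \<noteq> v"
  shows "{matching_partner M v, v} \<in> M"
proof -
  obtain u where "u \<noteq> v" "{u, v} \<in> M"
    using assms(2) unfolding matching_partner_def by (auto split: if_splits)
  with matching_partner_eq[OF assms(1)] show ?thesis by simp
qed

lemma matching_partner_involution:
  assumes "is_matching E M"
  shows "matching_partner M (matching_partner M v) = v"
proof (cases "matching_partner M v = v")
  case False
  then have "{v, matching_partner M v} \<in> M"
    using matching_partner_edge[OF assms] by (simp add: insert_commute)
  with False show ?thesis using matching_partner_eq[OF assms] by metis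
qed simp

lemma matching_partner_empty [simp]: "matching_partner {} v = v"
  by (simp add: matching_partner_def)

lemma matching_partner_crosses:
  assumes "is_matching E M" "edges_between M C D" "C \<inter> D = {}" "x \<in> C"
    and "matching_partner M x \<noteq> x"
  shows "matching_partner M x \<in> D"
proof -
  obtain u v where uv: "u \<in> C" "v \<in> D" "{matching_partner M x, x} = {u, v}"
    using matching_partner_edge[OF assms(1,5)] assms(2) unfolding edges_between_def by blast
  then have "x = u" using assms(3,4) by (metis disjoint_iff insert_iff singletonD)
  then show ?thesis using uv assms(5) by (metis insert_iff singletonD)
qed

lemma swap_step_eq: "swap_step M c v = c (matching_partner M v)"
  unfolding swap_step_def matching_partner_def by auto

text \<open>\<open>run_steps\<close> records which pebble sits on each vertex, so the partner map of the
  first matching is applied last.\<close>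

lemma run_steps_at_most_two:
  assumes "length Ms \<le> 2"
  obtains A B where "A \<in> insert {} (set Ms)" "B \<in> insert {} (set Ms)"
    and "run_steps Ms = matching_partner A \<circ> matching_partner B"
proof -
  consider "Ms = []" | M where "Ms = [M]" | M1 M2 where "Ms = [M1, M2]"
    using assms by (cases Ms; cases "tl Ms") auto
  then show ?thesis
  proof cases
    case 1
    then show ?thesis by (intro that[of "{}" "{}"]) (auto simp: run_steps_def)
  next
    case (2 M)
    then show ?thesis by (intro that[of M "{}"]) (auto simp: run_steps_def swap_step_eq)
  next
    case (3 M1 M2)
    then show ?thesis by (intro that[of M1 M2]) (auto simp: run_steps_def swap_step_eq)
  qed
qed

lemma first_matching_leaves_invariant_set:
  assumes A: "is_matching E A" "edges_between A C D"
    and B: "is_matching E B" "edges_between B C D"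
    and disjoint: "C \<inter> D = {}"
    and invariant: "\<forall>i\<in>C. \<pi> i \<in> C" and no_fixpoint: "\<forall>i\<in>C. \<pi> i \<noteq> i"
    and routed: "\<forall>i\<in>C. matching_partner A (matching_partner B (\<pi> i)) = i"
    and "i \<in> C"
  shows "matching_partner A i \<in> D"
proof -
  define j where "j = matching_partner B (\<pi> i)"
  have "\<pi> i \<in> C" "\<pi> i \<noteq> i" using invariant no_fixpoint \<open>i \<in> C\<close> by auto
  have "matching_partner A j = i" using routed \<open>i \<in> C\<close> unfolding j_def by blast
  then have partner_i: "matching_partner A i = j"
    using matching_partner_involution[OF A(1)] by metis
  show ?thesis
  proof (cases "j = \<pi> i")
    case True
    then have "i \<in> D"
      using matching_partner_crosses[OF A disjoint \<open>\<pi> i \<in> C\<close>] partner_i \<open>\<pi> i \<noteq> i\<close>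
        matching_partner_involution[OF A(1), of i] by metis
    then show ?thesis using disjoint \<open>i \<in> C\<close> by blast
  next
    case False
    then show ?thesis
      using matching_partner_crosses[OF B disjoint \<open>\<pi> i \<in> C\<close>] partner_i unfolding j_def by simp
  qed
qed

lemma cyclic_on_disjoint:
  assumes "cyclic_on f C" "cyclic_on f D" "C \<noteq> D"
  shows "C \<inter> D = {}"
  using assms orbit_cyclic_eq3 by (metis disjoint_iff)

lemma card_le_of_routable_cycles:
  assumes cycles: "cyclic_on \<pi> C" "cyclic_on \<pi> D" "C \<noteq> D"
    and A: "is_matching E A" "edges_between A C D"
    and B: "is_matching E B" "edges_between B C D"
    and routed: "\<forall>i\<in>C. matching_partner A (matching_partner B (\<pi> i)) = i"
  shows "card C \<le> card D"
proof (cases "\<exists>i\<in>C. \<pi> i = i")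
  case True
  then have "card C = 1" using cycles(1) eq_on_cyclic_on_iff1 by metis
  moreover have "D \<noteq> {}" "finite D"
    using cycles(2) finite_cyclic_on[OF cycles(2)] by (auto simp: cyclic_on_alldef)
  ultimately show ?thesis by (simp add: Suc_leI card_gt_0_iff)
next
  case False
  have "matching_partner A ` C \<subseteq> D"
    using first_matching_leaves_invariant_set[OF A B cyclic_on_disjoint[OF cycles]]
      cyclic_on_inI[OF cycles(1)] False routed by blast
  moreover have "inj_on (matching_partner A) C"
    by (metis inj_onI matching_partner_involution[OF A(1)])
  ultimately show ?thesis using card_inj_on_le finite_cyclic_on[OF cycles(2)] by blast
qed

lemma perm_cycles_cyclic_on:
  assumes "\<pi> permutes {1..n}" "C \<in> perm_cycles n \<pi>"
  shows "cyclic_on \<pi> C"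
proof -
  obtain a where "C = cycle_of \<pi> a" using assms(2) unfolding perm_cycles_def by blast
  moreover have "cycle_of \<pi> a = orbit \<pi> a"
    using assms(1) permutation_permutes orbit_altdef_permutation unfolding cycle_of_def
    by (metis finite_atLeastAtMost)
  ultimately show ?thesis using cyclic_on_orbit[OF assms(1)] by simp
qed

theorem lemma1:
  fixes n :: nat and E :: "nat \<Rightarrow> nat \<Rightarrow> bool" and \<pi> :: "nat \<Rightarrow> nat"
    and C1 C2 :: "nat set"
  assumes "simple_graph_on n E"
    and "connected_graph_on n E"
    and "\<pi> permutes {1..n}"
    and "C1 \<in> perm_cycles n \<pi>" and "C2 \<in> perm_cycles n \<pi>"
    and "C1 \<noteq> C2"
    and "mutually_routable_2 E \<pi> C1 C2"
  shows "card C1 = card C2"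
proof -
  have cycles: "cyclic_on \<pi> C1" "cyclic_on \<pi> C2"
    using perm_cycles_cyclic_on assms(3-5) by blast+
  obtain Ms where length: "length Ms \<le> 2"
    and matchings: "\<forall>M\<in>set Ms. is_matching E M \<and> edges_between M C1 C2"
    and routed: "\<forall>i\<in>C1 \<union> C2. run_steps Ms (\<pi> i) = i"
    using assms(7) unfolding mutually_routable_2_def edges_between_def by blast
  obtain A B where "A \<in> insert {} (set Ms)" "B \<in> insert {} (set Ms)"
    and run: "run_steps Ms = matching_partner A \<circ> matching_partner B"
    using run_steps_at_most_two[OF length] .
  then have "is_matching E A" "edges_between A C1 C2" "is_matching E B" "edges_between B C1 C2"
    using matchings by (auto simp: is_matching_def edges_between_def)
  moreover have "\<forall>i\<in>C1 \<union> C2. matching_partner A (matching_partner B (\<pi> i)) = i"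
    using routed run by simp
  ultimately show ?thesis
    using card_le_of_routable_cycles[OF cycles assms(6)]
      card_le_of_routable_cycles[OF cycles(2,1) assms(6)[symmetric]]
    by (simp add: edges_between_commute le_antisym)
qed

end
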